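(* Let $m\ge1$ be a fixed integer and let $G_n$ be the preferential attachment graph with parameter $m$. With probability $1-o(1)$ as $n\to\infty$, every vertex $i\in[n]$ with $d_n(i)\ge n^{1/2}/\log^{1/20}n$ satisfies $i\le n/\log^{1/39}n$.
   Context: Preferential attachment graph $G_n$ (Bollobás–Riordan construction): choose $x_1,\dots,x_{2mn}$ independently and uniformly from $[0,1]$; for $i=1,\dots,mn$ let $\{\ell_i,r_i\}=\{x_{2i-1},x_{2i}\}$ with $\ell_i<r_i$. Sort the $r_i$ as $R_1<\dots<R_{mn}$, put $R_0=0$, $W_j=R_{mj}$, $I_j=(W_{j-1},W_j]$. $G_n$ is the multigraph on $[n]$ with one edge $\{x,y\}$ ($x\le y$) for each pair with $\ell_i\in I_x$, $r_i\in I_y$. $d_n(i)$ is the degree of vertex $i$ in $G_n$. *)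

theory Defs
  imports "HOL-Probability.Probability"
begin

text \<open>Bollobas--Riordan preferential attachment graph G_n with parameter m.
  The sample point is omega :: nat => real; the variables x_1,...,x_{2mn} of the
  paper are omega 0, ..., omega (2mn-1), i.i.d. uniform on [0,1].\<close>

definition pa_space :: "nat \<Rightarrow> nat \<Rightarrow> (nat \<Rightarrow> real) measure" where
  "pa_space m n = PiM {..<2*m*n} (\<lambda>_. uniform_measure lborel {0..1::real})"

definition pa_left :: "(nat \<Rightarrow> real) \<Rightarrow> nat \<Rightarrow> real" where
  "pa_left \<omega> i = min (\<omega> (2*i)) (\<omega> (2*i+1))"

definition pa_right :: "(nat \<Rightarrow> real) \<Rightarrow> nat \<Rightarrow> real" where
  "pa_right \<omega> i = max (\<omega> (2*i)) (\<omega> (2*i+1))"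

definition pa_R :: "nat \<Rightarrow> nat \<Rightarrow> (nat \<Rightarrow> real) \<Rightarrow> nat \<Rightarrow> real" where
  "pa_R m n \<omega> k = (if k = 0 then 0 else sort (map (pa_right \<omega>) [0..<m*n]) ! (k - 1))"

definition pa_W :: "nat \<Rightarrow> nat \<Rightarrow> (nat \<Rightarrow> real) \<Rightarrow> nat \<Rightarrow> real" where
  "pa_W m n \<omega> j = pa_R m n \<omega> (m*j)"

definition pa_I :: "nat \<Rightarrow> nat \<Rightarrow> (nat \<Rightarrow> real) \<Rightarrow> nat \<Rightarrow> real set" where
  "pa_I m n \<omega> j = {pa_W m n \<omega> (j - 1) <.. pa_W m n \<omega> j}"

text \<open>Degree of vertex j in G_n: number of edge endpoints at j (a loop counts twice).\<close>
definition pa_degree :: "nat \<Rightarrow> nat \<Rightarrow> (nat \<Rightarrow> real) \<Rightarrow> nat \<Rightarrow> nat" where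
  "pa_degree m n \<omega> j =
     card {i. i < m*n \<and> pa_left \<omega> i \<in> pa_I m n \<omega> j}
   + card {i. i < m*n \<and> pa_right \<omega> i \<in> pa_I m n \<omega> j}"

end

theory Submission
  imports Defs "HOL-Real_Asymp.Real_Asymp"
begin

text \<open>
  Put \<open>\<delta> = log^{-1/39} n\<close>, \<open>h = n^{-3/4}\<close> and \<open>h' = n^{-5/4} log n\<close>. With probability \<open>1 - o(1)\<close>
  the sample is typical: fewer than \<open>m(B - 1)\<close> pairs lie entirely below \<open>\<delta>\<close> (Markov),
  every cell \<open>[th, th + h)\<close> of \<open>[\<delta>, 1]\<close> contains a right endpoint whose partner lies below
  the cell (each cell is missed with probability \<open>(1 - h\<delta>)^{mn}\<close>), and no cell of width \<open>h'\<close>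
  contains six of the \<open>2mn\<close> points (union bound over six-sets).

  For a typical sample and a vertex \<open>j > B = n / log^{1/39} n\<close>, every point of \<open>I_j\<close> has at
  least \<open>m(j - 1)\<close> right endpoints below it and therefore lies above \<open>\<delta>\<close>; and \<open>I_j\<close> contains
  fewer than \<open>m\<close> right endpoints, so it is shorter than \<open>(m + 1)h\<close>. Covering it by cells of
  width \<open>h'\<close> bounds the degree of \<open>j\<close> by \<open>5((m + 1)h/h' + 2) = O(n^{1/2} / log n)\<close>, which is
  below \<open>n^{1/2} / log^{1/20} n\<close>.
\<close>

section \<open>Products of the uniform distribution on the unit interval\<close>

definition unif01 :: "real measure" where
  "unif01 = uniform_measure lborel {0..1}"

lemma prob_space_unif01: "prob_space unif01"
  unfolding unif01_def by (rule prob_space_uniform_measure) auto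

lemma sets_unif01 [simp, measurable_cong]: "sets unif01 = sets borel"
  unfolding unif01_def by simp

lemma space_unif01 [simp]: "space unif01 = UNIV"
  unfolding unif01_def by simp

lemma measure_unif01: "A \<in> sets borel \<Longrightarrow> measure unif01 A = measure lborel ({0..1} \<inter> A)"
  unfolding unif01_def by (subst measure_uniform_measure) auto

lemma measure_unif01_Ico_le: "a \<le> b \<Longrightarrow> measure unif01 {a..<b} \<le> b - a"
proof -
  assume "a \<le> b"
  have "measure unif01 {a..<b} = measure lborel ({0..1} \<inter> {a..<b})" by (simp add: measure_unif01)
  also have "\<dots> \<le> measure lborel {a..<b}"
    by (rule measure_mono_fmeasurable) (use \<open>a \<le> b\<close> in \<open>auto simp: fmeasurable_def emeasure_lborel_Ico\<close>)
  also have "\<dots> = b - a" using \<open>a \<le> b\<close> by simp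
  finally show ?thesis .
qed

lemma measure_unif01_Ico: "0 \<le> a \<Longrightarrow> a \<le> b \<Longrightarrow> b \<le> 1 \<Longrightarrow> measure unif01 {a..<b} = b - a"
proof -
  assume "0 \<le> a" "a \<le> b" "b \<le> 1"
  then have "{0..1} \<inter> {a..<b} = {a..<b}" by auto
  with \<open>a \<le> b\<close> show ?thesis by (simp add: measure_unif01)
qed

lemma measure_unif01_lessThan: "0 \<le> u \<Longrightarrow> u \<le> 1 \<Longrightarrow> measure unif01 {..<u} = u"
proof -
  assume "0 \<le> u" "u \<le> 1"
  then have "{0..1} \<inter> {..<u} = {0..<u}" by auto
  with \<open>0 \<le> u\<close> show ?thesis by (simp add: measure_unif01)
qed

lemma pa_space_eq: "pa_space m n = PiM {..<2*(m*n)} (\<lambda>_. unif01)"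
  unfolding pa_space_def unif01_def by (simp add: mult.assoc)

lemma prob_space_PiM_unif01: "prob_space (PiM I (\<lambda>_. unif01))"
  by (rule prob_space_PiM) (rule prob_space_unif01)

lemma measurable_coord [measurable]:
  "(\<lambda>\<omega>. \<omega> k) \<in> borel_measurable (PiM I (\<lambda>_. borel :: 'a::topological_space measure))"
proof (cases "k \<in> I")
  case True
  then show ?thesis by measurable
next
  case False
  then have "\<omega> \<in> space (PiM I (\<lambda>_. borel :: 'a measure)) \<Longrightarrow> \<omega> k = undefined" for \<omega>
    by (auto simp: space_PiM PiE_def extensional_def)
  then have "(\<lambda>\<omega>. \<omega> k) \<in> borel_measurable (PiM I (\<lambda>_. borel :: 'a measure)) \<longleftrightarrow>
      (\<lambda>\<omega>. undefined :: 'a) \<in> borel_measurable (PiM I (\<lambda>_. borel :: 'a measure))"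
    by (rule measurable_cong)
  then show ?thesis by simp
qed

lemma indep_vars_coords:
  assumes "I \<noteq> {}"
  shows "prob_space.indep_vars (PiM I (\<lambda>_. unif01)) (\<lambda>_. unif01) (\<lambda>k \<omega>. \<omega> k) I"
proof -
  interpret P: prob_space "PiM I (\<lambda>_. unif01)" by (rule prob_space_PiM_unif01)
  show ?thesis
  proof (subst P.indep_vars_iff_distr_eq_PiM[OF assms])
    show "P.random_variable unif01 (\<lambda>\<omega>. \<omega> i)" for i
      by (subst measurable_cong_sets[OF sets_PiM_cong[OF refl sets_unif01] sets_unif01])
         (rule measurable_coord)
    have "distr (PiM I (\<lambda>_. unif01)) (PiM I (\<lambda>_. unif01)) (\<lambda>\<omega>. restrict \<omega> I)
        = distr (PiM I (\<lambda>_. unif01)) (PiM I (\<lambda>_. unif01)) (\<lambda>\<omega>. \<omega>)"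
      by (rule distr_cong) (auto simp: space_PiM)
    also have "\<dots> = PiM I (\<lambda>i. distr (PiM I (\<lambda>_. unif01)) unif01 (\<lambda>\<omega>. \<omega> i))"
      by (simp add: distr_PiM_component[OF prob_space_unif01] cong: PiM_cong)
    finally show "distr (PiM I (\<lambda>_. unif01)) (PiM I (\<lambda>_. unif01)) (\<lambda>\<omega>. \<lambda>i\<in>I. \<omega> i)
        = PiM I (\<lambda>i. distr (PiM I (\<lambda>_. unif01)) unif01 (\<lambda>\<omega>. \<omega> i))" by simp
  qed
qed

lemma prob_coord:
  assumes "k \<in> I" "A \<in> sets borel"
  shows "measure (PiM I (\<lambda>_. unif01)) ((\<lambda>\<omega>. \<omega> k) -` A \<inter> space (PiM I (\<lambda>_. unif01)))
       = measure unif01 A"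
proof -
  have "measure unif01 A = measure (distr (PiM I (\<lambda>_. unif01)) unif01 (\<lambda>\<omega>. \<omega> k)) A"
    by (simp add: distr_PiM_component[OF prob_space_unif01 assms(1)])
  also have "\<dots> = measure (PiM I (\<lambda>_. unif01)) ((\<lambda>\<omega>. \<omega> k) -` A \<inter> space (PiM I (\<lambda>_. unif01)))"
    by (rule measure_distr) (use assms in simp_all)
  finally show ?thesis by simp
qed

lemma prob_coords_in:
  assumes "finite J" "J \<noteq> {}" "J \<subseteq> I" "\<And>k. k \<in> J \<Longrightarrow> A k \<in> sets borel"
  shows "measure (PiM I (\<lambda>_. unif01)) {\<omega> \<in> space (PiM I (\<lambda>_. unif01)). \<forall>k\<in>J. \<omega> k \<in> A k}
       = (\<Prod>k\<in>J. measure unif01 (A k))"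
proof -
  interpret P: prob_space "PiM I (\<lambda>_. unif01)" by (rule prob_space_PiM_unif01)
  have "{\<omega> \<in> space (PiM I (\<lambda>_. unif01)). \<forall>k\<in>J. \<omega> k \<in> A k}
      = (\<Inter>k\<in>J. (\<lambda>\<omega>. \<omega> k) -` A k \<inter> space (PiM I (\<lambda>_. unif01)))"
    using assms(2) by auto
  also have "P.prob \<dots> = (\<Prod>k\<in>J. P.prob ((\<lambda>\<omega>. \<omega> k) -` A k \<inter> space (PiM I (\<lambda>_. unif01))))"
    by (rule P.indep_varsD[OF indep_vars_coords]) (use assms in auto)
  also have "\<dots> = (\<Prod>k\<in>J. measure unif01 (A k))"
    by (rule prod.cong) (use assms in \<open>auto intro!: prob_coord\<close>)
  finally show ?thesis .
qed

lemma real_card_Collect_less_eq_sum: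
  fixes N :: nat
  shows "real (card {l. l < N \<and> P l}) = (\<Sum>l<N. if P l then 1 else 0)"
proof -
  have "{l. l < N \<and> P l} = {l \<in> {..<N}. P l}" by auto
  then have "real (card {l. l < N \<and> P l}) = (\<Sum>l\<in>{l \<in> {..<N}. P l}. 1)" by simp
  also have "\<dots> = (\<Sum>l<N. if P l then 1 else 0)" by (rule sum.inter_filter) simp
  finally show ?thesis .
qed

section \<open>Unlikely configurations of uniform points\<close>

lemma prob_no_pair_hits_cell:
  assumes "1 \<le> N" "0 \<le> u" "0 \<le> h" "u + h \<le> 1"
  shows "measure (PiM {..<2*N} (\<lambda>_. unif01))
           {\<omega> \<in> space (PiM {..<2*N} (\<lambda>_. unif01)). \<forall>l<N. \<not> (\<omega> (2*l) \<in> {u..<u+h} \<and> \<omega> (2*l+1) < u)}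
       = (1 - h * u) ^ N"
proof -
  let ?M = "PiM {..<2*N} (\<lambda>_. unif01)"
  interpret P: prob_space ?M by (rule prob_space_PiM_unif01)
  let ?K = "\<lambda>l::nat. {2*l, 2*l+1}"
  let ?pair = "\<lambda>l \<omega>. restrict \<omega> (?K l)"
  let ?A = "\<lambda>l. {y \<in> space (PiM (?K l) (\<lambda>_. unif01)). \<not> (y (2*l) \<in> {u..<u+h} \<and> y (2*l+1) < u)}"
  have ind: "P.indep_vars (\<lambda>l. PiM (?K l) (\<lambda>_. unif01)) ?pair {..<N}"
    by (rule P.indep_vars_restrict[OF indep_vars_coords])
       (use assms(1) in \<open>auto simp: disjoint_family_on_def lessThan_empty_iff\<close>)
  have eq: "{\<omega> \<in> space ?M. \<forall>l<N. \<not> (\<omega> (2*l) \<in> {u..<u+h} \<and> \<omega> (2*l+1) < u)}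
      = (\<Inter>l\<in>{..<N}. ?pair l -` ?A l \<inter> space ?M)"
    using assms(1) by (auto simp: space_PiM lessThan_empty_iff)
  have "P.prob (\<Inter>l\<in>{..<N}. ?pair l -` ?A l \<inter> space ?M) = (\<Prod>l<N. P.prob (?pair l -` ?A l \<inter> space ?M))"
    by (rule P.indep_varsD[OF ind]) (use assms(1) in \<open>auto simp: lessThan_empty_iff\<close>)
  also have "\<dots> = (\<Prod>l<N. 1 - h * u)"
  proof (rule prod.cong)
    fix l assume "l \<in> {..<N}"
    let ?hit = "{\<omega> \<in> space ?M. \<omega> (2*l) \<in> {u..<u+h} \<and> \<omega> (2*l+1) < u}"
    have "?pair l -` ?A l \<inter> space ?M = space ?M - ?hit"
      by (auto simp: space_PiM)
    moreover have "P.prob ?hit = h * u"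
    proof -
      have "?hit = {\<omega> \<in> space ?M. \<forall>k\<in>?K l. \<omega> k \<in> (if k = 2*l then {u..<u+h} else {..<u})}"
        by auto
      also have "P.prob \<dots> = h * u"
        using \<open>l \<in> {..<N}\<close> assms
        by (subst prob_coords_in) (auto simp: measure_unif01_Ico measure_unif01_lessThan)
      finally show ?thesis .
    qed
    moreover have "?hit \<in> P.events" by measurable
    ultimately show "P.prob (?pair l -` ?A l \<inter> space ?M) = 1 - h * u"
      by (simp add: P.prob_compl)
  qed simp
  finally show ?thesis by (simp only: eq prod_constant card_lessThan)
qed

lemma prob_many_coords_in_Ico:
  assumes "a \<le> b" "1 \<le> s"
  shows "measure (PiM {..<d} (\<lambda>_. unif01))
           {\<omega> \<in> space (PiM {..<d} (\<lambda>_. unif01)). s \<le> card {k. k < d \<and> \<omega> k \<in> {a..<b}}}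
       \<le> (real d * (b - a)) ^ s"
proof -
  let ?M = "PiM {..<d} (\<lambda>_. unif01)"
  interpret P: prob_space ?M by (rule prob_space_PiM_unif01)
  let ?Ss = "{S. S \<subseteq> {..<d} \<and> card S = s}"
  let ?E = "\<lambda>S. {\<omega> \<in> space ?M. \<forall>k\<in>S. \<omega> k \<in> {a..<b}}"
  have fin: "finite ?Ss" by (rule finite_subset[of _ "Pow {..<d}"]) auto
  have Es: "?E S \<in> P.events" if "S \<in> ?Ss" for S
    using that finite_subset[OF _ finite_lessThan] by measurable
  have "{\<omega> \<in> space ?M. s \<le> card {k. k < d \<and> \<omega> k \<in> {a..<b}}} \<subseteq> (\<Union>S\<in>?Ss. ?E S)"
  proof
    fix \<omega> assume "\<omega> \<in> {\<omega> \<in> space ?M. s \<le> card {k. k < d \<and> \<omega> k \<in> {a..<b}}}"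
    then have \<omega>: "\<omega> \<in> space ?M" "s \<le> card {k. k < d \<and> \<omega> k \<in> {a..<b}}" by auto
    obtain S where "S \<subseteq> {k. k < d \<and> \<omega> k \<in> {a..<b}}" "card S = s"
      using obtain_subset_with_card_n[OF \<omega>(2)] by blast
    with \<omega>(1) show "\<omega> \<in> (\<Union>S\<in>?Ss. ?E S)" by auto
  qed
  then have "P.prob {\<omega> \<in> space ?M. s \<le> card {k. k < d \<and> \<omega> k \<in> {a..<b}}} \<le> P.prob (\<Union>S\<in>?Ss. ?E S)"
    by (rule P.finite_measure_mono) (use fin Es in auto)
  also have "\<dots> \<le> (\<Sum>S\<in>?Ss. P.prob (?E S))"
    by (rule P.finite_measure_subadditive_finite) (use fin Es in auto)
  also have "\<dots> \<le> (\<Sum>S\<in>?Ss. (b - a) ^ s)"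
  proof (rule sum_mono)
    fix S assume S: "S \<in> ?Ss"
    then have "finite S" "S \<noteq> {}" using assms(2) by (auto intro: finite_subset)
    then have "P.prob (?E S) = measure unif01 {a..<b} ^ s"
      using S by (subst prob_coords_in) auto
    also have "\<dots> \<le> (b - a) ^ s"
      by (rule power_mono[OF measure_unif01_Ico_le[OF assms(1)]]) simp
    finally show "P.prob (?E S) \<le> (b - a) ^ s" .
  qed
  also have "\<dots> = real (d choose s) * (b - a) ^ s"
    by (simp add: n_subsets)
  also have "\<dots> \<le> real d ^ s * (b - a) ^ s"
  proof (rule mult_right_mono)
    have "d choose s \<le> d ^ s"
      by (cases "s \<le> d") (auto simp: binomial_le_pow binomial_eq_0)
    then show "real (d choose s) \<le> real d ^ s" by (metis of_nat_le_iff of_nat_power)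
  qed (use assms(1) in simp)
  finally show ?thesis by (simp add: power_mult_distrib)
qed

lemma prob_many_pairs_below:
  assumes "0 \<le> \<delta>" "\<delta> \<le> 1" "0 < c"
  shows "measure (PiM {..<2*N} (\<lambda>_. unif01))
           {\<omega> \<in> space (PiM {..<2*N} (\<lambda>_. unif01)).
              c \<le> real (card {l. l < N \<and> \<omega> (2*l) < \<delta> \<and> \<omega> (2*l+1) < \<delta>})}
       \<le> real N * \<delta>^2 / c"
proof -
  let ?M = "PiM {..<2*N} (\<lambda>_. unif01)"
  interpret P: prob_space ?M by (rule prob_space_PiM_unif01)
  let ?E = "\<lambda>l. {\<omega> \<in> space ?M. \<forall>k\<in>{2*l, 2*l+1}. \<omega> k \<in> {..<\<delta>}}"
  let ?X = "\<lambda>\<omega>. real (card {l. l < N \<and> \<omega> (2*l) < \<delta> \<and> \<omega> (2*l+1) < \<delta>})"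
  have X_eq: "?X \<omega> = (\<Sum>l<N. indicator (?E l) \<omega>)" if "\<omega> \<in> space ?M" for \<omega>
    unfolding real_card_Collect_less_eq_sum using that by (intro sum.cong) (auto simp: indicator_def)
  have Es: "?E l \<in> P.events" for l by measurable
  have int: "integrable ?M (\<lambda>\<omega>. \<Sum>l<N. indicator (?E l) \<omega> :: real)"
    using Es by (intro Bochner_Integration.integrable_sum integrable_real_indicator) (auto simp: P.emeasure_eq_measure)
  have "P.prob {\<omega> \<in> space ?M. c \<le> ?X \<omega>} = P.prob {\<omega> \<in> space ?M. c \<le> (\<Sum>l<N. indicator (?E l) \<omega>)}"
    using X_eq by (metis (no_types, lifting))
  also have "\<dots> \<le> (\<integral>\<omega>. (\<Sum>l<N. indicator (?E l) \<omega>) \<partial>?M) / c"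
    by (rule integral_Markov_inequality_measure[OF int]) (use assms in \<open>auto intro!: sum_nonneg\<close>)
  also have "(\<integral>\<omega>. (\<Sum>l<N. indicator (?E l) \<omega>) \<partial>?M) = (\<Sum>l<N. P.prob (?E l))"
    using Es by (subst Bochner_Integration.integral_sum) (auto simp: P.emeasure_eq_measure)
  also have "\<dots> = (\<Sum>l<N. \<delta>^2)"
  proof (rule sum.cong[OF refl])
    fix l assume "l \<in> {..<N}"
    then show "P.prob (?E l) = \<delta>^2"
      using assms by (subst prob_coords_in) (auto simp: measure_unif01_lessThan power2_eq_square)
  qed
  finally show ?thesis by simp
qed

lemma prob_coord_outside_unit:
  fixes d :: nat
  shows "measure (PiM {..<d} (\<lambda>_. unif01)) {\<omega> \<in> space (PiM {..<d} (\<lambda>_. unif01)). \<exists>k<d. \<omega> k \<notin> {0..1}} = 0"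
proof -
  let ?M = "PiM {..<d} (\<lambda>_. unif01)"
  interpret P: prob_space ?M by (rule prob_space_PiM_unif01)
  let ?E = "\<lambda>k. (\<lambda>\<omega>. \<omega> k) -` (- {0..1}) \<inter> space ?M"
  have "{\<omega> \<in> space ?M. \<exists>k<d. \<omega> k \<notin> {0..1}} = (\<Union>k<d. ?E k)" by auto
  also have "P.prob \<dots> \<le> (\<Sum>k<d. P.prob (?E k))"
    by (rule P.finite_measure_subadditive_finite) auto
  also have "\<dots> = 0"
    by (simp add: prob_coord measure_unif01)
  finally show ?thesis by (simp add: measure_nonneg antisym)
qed

section \<open>Vertex intervals\<close>

lemma sorted_nth_less_iff:
  fixes xs :: "real list"
  assumes "sorted xs" "k < length xs"
  shows "xs ! k < x \<longleftrightarrow> k < length (filter (\<lambda>z. z < x) xs)"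
  using assms
proof (induction xs arbitrary: k)
  case Nil
  then show ?case by simp
next
  case (Cons a xs)
  show ?case
  proof (cases "a < x")
    case True
    then show ?thesis using Cons by (cases k) auto
  next
    case False
    then have "filter (\<lambda>z. z < x) xs = []" "\<not> (a # xs) ! k < x"
      using Cons.prems by (auto simp: filter_empty_conv nth_Cons split: nat.split dest!: nth_mem)
    with False show ?thesis by simp
  qed
qed

definition right_count :: "nat \<Rightarrow> (nat \<Rightarrow> real) \<Rightarrow> real \<Rightarrow> nat" where
  "right_count N \<omega> x = card {l. l < N \<and> pa_right \<omega> l < x}"

lemma pa_R_less_iff:
  assumes "1 \<le> k" "k \<le> m * n"
  shows "pa_R m n \<omega> k < x \<longleftrightarrow> k \<le> right_count (m*n) \<omega> x"
proof -
  let ?ys = "map (pa_right \<omega>) [0..<m*n]"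
  have "pa_R m n \<omega> k < x \<longleftrightarrow> k - 1 < length (filter (\<lambda>z. z < x) (sort ?ys))"
    using assms by (simp add: pa_R_def sorted_nth_less_iff)
  also have "length (filter (\<lambda>z. z < x) (sort ?ys)) = length (filter (\<lambda>z. z < x) ?ys)"
    by (metis mset_filter mset_sort size_mset)
  also have "\<dots> = right_count (m*n) \<omega> x"
    unfolding right_count_def length_filter_conv_card by (rule arg_cong[where f = card]) auto
  finally show ?thesis using assms by linarith
qed

lemma mem_pa_I_iff:
  assumes "1 \<le> j" "j \<le> n" "1 \<le> m"
  shows "x \<in> pa_I m n \<omega> j \<longleftrightarrow>
    (if j = 1 then 0 < x else m*(j-1) \<le> right_count (m*n) \<omega> x) \<and> right_count (m*n) \<omega> x < m*j"
proof -
  have "x \<le> pa_W m n \<omega> j \<longleftrightarrow> right_count (m*n) \<omega> x < m*j"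
    using pa_R_less_iff[of "m*j" m n \<omega> x] assms by (auto simp: pa_W_def)
  moreover have "pa_W m n \<omega> (j-1) < x \<longleftrightarrow> (if j = 1 then 0 < x else m*(j-1) \<le> right_count (m*n) \<omega> x)"
    using pa_R_less_iff[of "m*(j-1)" m n \<omega> x] assms by (auto simp: pa_W_def pa_R_def)
  ultimately show ?thesis unfolding pa_I_def by auto
qed

lemma card_pa_endpoints:
  "card {i. i < N \<and> pa_left \<omega> i \<in> S} + card {i. i < N \<and> pa_right \<omega> i \<in> S}
     = card {k. k < 2*N \<and> \<omega> k \<in> S}"
proof -
  have "real (card {i. i < N \<and> pa_left \<omega> i \<in> S}) + real (card {i. i < N \<and> pa_right \<omega> i \<in> S})
     = real (card {k. k < 2*N \<and> \<omega> k \<in> S})"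
  proof (induction N)
    case 0
    then show ?case by simp
  next
    case (Suc N)
    have "(if pa_left \<omega> N \<in> S then 1 else 0) + (if pa_right \<omega> N \<in> S then 1 else 0)
        = (if \<omega> (2*N) \<in> S then 1 else 0) + (if \<omega> (2*N+1) \<in> S then (1::real) else 0)"
      unfolding pa_left_def pa_right_def by (cases "\<omega> (2*N) \<le> \<omega> (2*N+1)") (auto simp: min_def max_def)
    moreover have "2 * Suc N = Suc (Suc (2*N))" by simp
    ultimately show ?case using Suc unfolding real_card_Collect_less_eq_sum by (simp add: algebra_simps)
  qed
  then show ?thesis by linarith
qed

lemma pa_degree_eq_card: "pa_degree m n \<omega> j = card {k. k < 2*(m*n) \<and> \<omega> k \<in> pa_I m n \<omega> j}"
  unfolding pa_degree_def by (rule card_pa_endpoints)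

lemma measurable_pa_degree:
  assumes "1 \<le> m" "j \<in> {1..n}"
  shows "(\<lambda>\<omega>. pa_degree m n \<omega> j) \<in> measurable (PiM I (\<lambda>_. unif01)) (count_space UNIV)"
proof -
  have [measurable]: "(\<lambda>\<omega>. right_count (m*n) \<omega> (\<omega> k)) \<in> measurable (PiM I (\<lambda>_. unif01)) (count_space UNIV)"
    for k unfolding right_count_def pa_right_def by measurable
  have "pa_degree m n \<omega> j = card {k. k < 2*(m*n) \<and>
      (if j = 1 then 0 < \<omega> k else m*(j-1) \<le> right_count (m*n) \<omega> (\<omega> k)) \<and> right_count (m*n) \<omega> (\<omega> k) < m*j}"
    for \<omega>
    using assms by (simp add: pa_degree_eq_card mem_pa_I_iff)
  then show ?thesis
    by (cases "j = 1") simp_all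
qed

lemma sets_high_degree_vertices_early:
  assumes "1 \<le> m"
  shows "{\<omega> \<in> space (PiM I (\<lambda>_. unif01)). \<forall>j\<in>{1..n}. K \<le> real (pa_degree m n \<omega> j) \<longrightarrow> real j \<le> B}
    \<in> sets (PiM I (\<lambda>_. unif01))"
proof (intro sets.sets_Collect_finite_All)
  fix j assume "j \<in> {1..n}"
  then have [measurable]: "(\<lambda>\<omega>. pa_degree m n \<omega> j) \<in> measurable (PiM I (\<lambda>_. unif01)) (count_space UNIV)"
    by (rule measurable_pa_degree[OF assms])
  show "{\<omega> \<in> space (PiM I (\<lambda>_. unif01)). K \<le> real (pa_degree m n \<omega> j) \<longrightarrow> real j \<le> B}
      \<in> sets (PiM I (\<lambda>_. unif01))"
    by measurable
qed simp

section \<open>Degrees for typical samples\<close>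

lemma right_count_le_pairs_below:
  "x \<le> \<delta> \<Longrightarrow> right_count N \<omega> x \<le> card {l. l < N \<and> \<omega> (2*l) < \<delta> \<and> \<omega> (2*l+1) < \<delta>}"
  unfolding right_count_def pa_right_def by (intro card_mono) auto

lemma right_count_add:
  assumes "x \<le> y"
  shows "right_count N \<omega> y = right_count N \<omega> x + card {l. l < N \<and> x \<le> pa_right \<omega> l \<and> pa_right \<omega> l < y}"
proof -
  have "{l. l < N \<and> pa_right \<omega> l < y}
      = {l. l < N \<and> pa_right \<omega> l < x} \<union> {l. l < N \<and> x \<le> pa_right \<omega> l \<and> pa_right \<omega> l < y}"
    using assms by auto
  then show ?thesis
    unfolding right_count_def by (simp add: card_Un_disjoint disjoint_iff)
qed

lemma nat_floor_divide_eq: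
  assumes "0 < h" "real t * h \<le> x" "x < real t * h + h"
  shows "nat \<lfloor>x / h\<rfloor> = t"
proof -
  have "real t \<le> x / h" "x / h < real t + 1"
    using assms by (simp_all add: field_simps)
  then have "\<lfloor>x / h\<rfloor> = int t" by (simp add: floor_eq_iff)
  then show ?thesis by simp
qed

lemma nat_floor_divide_bounds:
  assumes "0 < h" "0 \<le> x"
  shows "real (nat \<lfloor>x / h\<rfloor>) * h \<le> x" "x < real (nat \<lfloor>x / h\<rfloor>) * h + h"
proof -
  have "real (nat \<lfloor>x / h\<rfloor>) \<le> x / h" "x / h < real (nat \<lfloor>x / h\<rfloor>) + 1"
    using assms by (simp_all add: of_nat_nat)
  with assms show "real (nat \<lfloor>x / h\<rfloor>) * h \<le> x" "x < real (nat \<lfloor>x / h\<rfloor>) * h + h"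
    by (simp_all only: pos_le_divide_eq pos_divide_less_eq distrib_right mult_1)
qed

lemma many_right_endpoints_in_long_interval:
  fixes \<omega> :: "nat \<Rightarrow> real"
  assumes cells: "\<And>t::nat. \<delta> \<le> real t * h \<Longrightarrow> real t * h + h \<le> 1 \<Longrightarrow>
      \<exists>l<N. \<omega> (2*l) \<in> {real t * h..<real t * h + h} \<and> \<omega> (2*l+1) < real t * h"
    and "0 < h" "0 \<le> a" "\<delta> \<le> a" "a + (real m + 1) * h \<le> b" "b \<le> 1"
  shows "m \<le> card {l. l < N \<and> a \<le> pa_right \<omega> l \<and> pa_right \<omega> l < b}"
proof -
  define t0 where "t0 = nat \<lceil>a / h\<rceil>"
  have "a / h \<le> real t0" "real t0 < a / h + 1"
    using assms unfolding t0_def by (simp_all add: of_nat_nat) linarith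
  then have t0: "a \<le> real t0 * h" "real t0 * h < a + h"
    using \<open>0 < h\<close> by (simp_all add: field_simps)
  have inside: "a \<le> real (t0+i) * h \<and> real (t0+i) * h + h \<le> b" if "i < m" for i
  proof -
    have "(real i + 1) * h \<le> real m * h" using that \<open>0 < h\<close> by (intro mult_right_mono) auto
    then have "real i * h + h \<le> real m * h" by (simp add: distrib_right)
    moreover have "real (t0+i) * h = real t0 * h + real i * h" by (simp add: distrib_right)
    moreover have "0 \<le> real i * h" using \<open>0 < h\<close> by simp
    moreover have "a + real m * h + h \<le> b" using assms(5) by (simp add: distrib_right)
    ultimately show ?thesis using t0 by linarith
  qed
  have "\<exists>l<N. \<omega> (2*l) \<in> {real (t0+i) * h..<real (t0+i) * h + h} \<and> \<omega> (2*l+1) < real (t0+i) * h"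
    if "i < m" for i
  proof (rule cells)
    show "\<delta> \<le> real (t0+i) * h" "real (t0+i) * h + h \<le> 1"
      using inside[OF that] assms(4,6) by linarith+
  qed
  \<comment> \<open>The pairs found in the \<open>m\<close> cells are distinct because the cells are disjoint.\<close>
  then obtain f where f: "\<And>i. i < m \<Longrightarrow> f i < N \<and>
      \<omega> (2 * f i) \<in> {real (t0+i) * h..<real (t0+i) * h + h} \<and> \<omega> (2 * f i + 1) < real (t0+i) * h"
    by metis
  have right: "pa_right \<omega> (f i) = \<omega> (2 * f i)" if "i < m" for i
    using f[OF that] by (simp add: pa_right_def max_def)
  have "nat \<lfloor>pa_right \<omega> (f i) / h\<rfloor> = t0 + i" if "i < m" for i
    using f[OF that] right[OF that] \<open>0 < h\<close> by (intro nat_floor_divide_eq) auto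
  then have "inj_on f {..<m}"
    by (intro inj_onI) (metis lessThan_iff add_left_cancel)
  moreover have "f ` {..<m} \<subseteq> {l. l < N \<and> a \<le> pa_right \<omega> l \<and> pa_right \<omega> l < b}"
    using f right inside by fastforce
  ultimately show ?thesis
    using card_inj_on_le[of f "{..<m}"] by simp
qed

lemma card_points_in_Icc_le:
  fixes \<omega> :: "nat \<Rightarrow> real"
  assumes sparse: "\<And>t::nat. t \<le> T \<Longrightarrow> card {k. k < d \<and> \<omega> k \<in> {real t * h..<real t * h + h}} \<le> c"
    and "0 < h" "0 \<le> a" "a \<le> b" "b / h < real T + 1"
  shows "real (card {k. k < d \<and> \<omega> k \<in> {a..b}}) \<le> real c * ((b - a) / h + 2)"
proof -
  define cell where "cell x = nat \<lfloor>x / h\<rfloor>" for x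
  let ?C = "\<lambda>t::nat. {k. k < d \<and> \<omega> k \<in> {real t * h..<real t * h + h}}"
  have cell_mono: "cell x \<le> cell y" if "x \<le> y" for x y
    unfolding cell_def using that \<open>0 < h\<close> by (intro nat_mono floor_mono divide_right_mono) auto
  have "cell b \<le> T"
    using \<open>b / h < real T + 1\<close> unfolding cell_def by linarith
  have "{k. k < d \<and> \<omega> k \<in> {a..b}} \<subseteq> (\<Union>t\<in>{cell a..cell b}. ?C t)"
  proof
    fix k assume k: "k \<in> {k. k < d \<and> \<omega> k \<in> {a..b}}"
    then have "k \<in> ?C (cell (\<omega> k))"
      using nat_floor_divide_bounds[of h "\<omega> k"] assms unfolding cell_def by auto
    moreover have "cell (\<omega> k) \<in> {cell a..cell b}" using k cell_mono by auto
    ultimately show "k \<in> (\<Union>t\<in>{cell a..cell b}. ?C t)" by blast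
  qed
  then have "card {k. k < d \<and> \<omega> k \<in> {a..b}} \<le> card (\<Union>t\<in>{cell a..cell b}. ?C t)"
    by (intro card_mono) auto
  also have "\<dots> \<le> (\<Sum>t\<in>{cell a..cell b}. card (?C t))" by (rule card_UN_le) simp
  also have "\<dots> \<le> (\<Sum>t\<in>{cell a..cell b}. c)"
    using sparse \<open>cell b \<le> T\<close> by (intro sum_mono) auto
  finally have "card {k. k < d \<and> \<omega> k \<in> {a..b}} \<le> c * (cell b + 1 - cell a)"
    by (simp add: mult.commute)
  then have "real (card {k. k < d \<and> \<omega> k \<in> {a..b}}) \<le> real c * real (cell b + 1 - cell a)"
    by (metis of_nat_le_iff of_nat_mult)
  also have "\<dots> \<le> real c * ((b - a) / h + 2)"
  proof (rule mult_left_mono)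
    have "real (cell b) \<le> b / h" "a / h < real (cell a) + 1"
      using assms unfolding cell_def by (simp_all add: of_nat_nat)
    then show "real (cell b + 1 - cell a) \<le> (b - a) / h + 2"
      using cell_mono[OF \<open>a \<le> b\<close>] by (simp add: of_nat_diff diff_divide_distrib)
  qed simp
  finally show ?thesis .
qed

lemma finite_subset_Icc:
  fixes S :: "'a::linorder set"
  assumes "finite S" "S \<noteq> {}"
  obtains a b where "a \<in> S" "b \<in> S" "S \<subseteq> {a..b}"
  using assms by (intro that[of "Min S" "Max S"]) auto

lemma pa_I_ge_if_few_low:
  assumes "1 \<le> m" "j \<in> {2..n}" "x \<in> pa_I m n \<omega> j"
    and few_low: "card {l. l < m*n \<and> \<omega> (2*l) < \<delta> \<and> \<omega> (2*l+1) < \<delta>} < m*(j-1)"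
  shows "\<delta> \<le> x"
proof (rule ccontr)
  assume "\<not> \<delta> \<le> x"
  then have "right_count (m*n) \<omega> x \<le> card {l. l < m*n \<and> \<omega> (2*l) < \<delta> \<and> \<omega> (2*l+1) < \<delta>}"
    by (intro right_count_le_pairs_below) simp
  moreover have "m*(j-1) \<le> right_count (m*n) \<omega> x"
    using assms by (simp add: mem_pa_I_iff)
  ultimately show False using few_low by linarith
qed

lemma pa_I_diam_less:
  fixes \<omega> :: "nat \<Rightarrow> real"
  assumes "1 \<le> m" "j \<in> {1..n}" "x \<in> pa_I m n \<omega> j" "y \<in> pa_I m n \<omega> j" "x \<le> y"
    and cells: "\<And>t::nat. \<delta> \<le> real t * h \<Longrightarrow> real t * h + h \<le> 1 \<Longrightarrow>
      \<exists>l<m*n. \<omega> (2*l) \<in> {real t * h..<real t * h + h} \<and> \<omega> (2*l+1) < real t * h"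
    and "0 < h" "0 \<le> x" "\<delta> \<le> x" "y \<le> 1"
  shows "y - x < (real m + 1) * h"
proof (rule ccontr)
  assume "\<not> y - x < (real m + 1) * h"
  then have "x + (real m + 1) * h \<le> y" by linarith
  with many_right_endpoints_in_long_interval[OF cells assms(7-9) _ assms(10)]
  have "m \<le> card {l. l < m*n \<and> x \<le> pa_right \<omega> l \<and> pa_right \<omega> l < y}"
    by simp
  moreover have "m*(j-1) \<le> right_count (m*n) \<omega> x" "right_count (m*n) \<omega> y < m*j"
    using assms(1-4) by (auto simp: mem_pa_I_iff split: if_splits)
  moreover have "m*j = m*(j-1) + m" using assms(2) by (cases j) auto
  ultimately show False using right_count_add[OF \<open>x \<le> y\<close>, of "m*n" \<omega>] by linarith
qed

definition pa_typical :: "nat \<Rightarrow> real \<Rightarrow> real \<Rightarrow> real \<Rightarrow> nat \<Rightarrow> real \<Rightarrow> (nat \<Rightarrow> real) \<Rightarrow> bool" where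
  "pa_typical N c \<delta> h T h' \<omega> \<longleftrightarrow>
     (\<forall>k<2*N. \<omega> k \<in> {0..1}) \<and>
     real (card {l. l < N \<and> \<omega> (2*l) < \<delta> \<and> \<omega> (2*l+1) < \<delta>}) < c \<and>
     (\<forall>t::nat. \<delta> \<le> real t * h \<longrightarrow> real t * h + h \<le> 1 \<longrightarrow>
        (\<exists>l<N. \<omega> (2*l) \<in> {real t * h..<real t * h + h} \<and> \<omega> (2*l+1) < real t * h)) \<and>
     (\<forall>t\<le>T. card {k. k < 2*N \<and> \<omega> k \<in> {real t * h'..<real t * h' + h'}} \<le> 5)"

lemma pa_degree_less_if_late:
  fixes \<omega> :: "nat \<Rightarrow> real"
  assumes "pa_typical (m*n) (real m * (B - 1)) \<delta> h T h' \<omega>"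
    and "1 \<le> m" "j \<in> {1..n}" "1 \<le> B" "B < real j"
    and "0 < \<delta>" "0 < h" "0 < h'" "1 / h' \<le> real T"
    and K: "5 * ((real m + 1) * h / h' + 2) < K"
  shows "real (pa_degree m n \<omega> j) < K"
proof (rule ccontr)
  let ?A = "{k. k < 2*(m*n) \<and> \<omega> k \<in> pa_I m n \<omega> j}"
  note typical = assms(1)[unfolded pa_typical_def]
  assume "\<not> real (pa_degree m n \<omega> j) < K"
  then have K_le: "K \<le> real (card ?A)" by (simp add: pa_degree_eq_card)
  moreover have "0 < K"
    using K \<open>0 < h\<close> \<open>0 < h'\<close> by (smt (verit) divide_nonneg_pos mult_nonneg_nonneg of_nat_0_le_iff)
  ultimately have "?A \<noteq> {}" by (metis card.empty of_nat_0 not_less)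
  then obtain a b where ab: "a \<in> \<omega> ` ?A" "b \<in> \<omega> ` ?A" "\<omega> ` ?A \<subseteq> {a..b}"
    using finite_subset_Icc[of "\<omega> ` ?A"] by auto
  then have I: "a \<in> pa_I m n \<omega> j" "b \<in> pa_I m n \<omega> j" "a \<le> b" by auto
  have "b \<le> 1" using ab(2) typical by auto
  have "j \<in> {2..n}" using assms(3-5) by auto
  moreover have few_low: "card {l. l < m*n \<and> \<omega> (2*l) < \<delta> \<and> \<omega> (2*l+1) < \<delta>} < m*(j-1)"
  proof -
    have "real m * (B - 1) \<le> real (m*(j-1))"
      using assms(3,5) \<open>j \<in> {2..n}\<close> by (simp add: of_nat_diff mult_left_mono)
    with typical show ?thesis by linarith
  qed
  ultimately have "\<delta> \<le> a" using pa_I_ge_if_few_low[OF assms(2) _ I(1)] by blast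
  with \<open>0 < \<delta>\<close> have "0 \<le> a" by simp
  have cells: "\<exists>l<m*n. \<omega> (2*l) \<in> {real t * h..<real t * h + h} \<and> \<omega> (2*l+1) < real t * h"
    if "\<delta> \<le> real t * h" "real t * h + h \<le> 1" for t :: nat
    using typical that by blast
  have "b - a < (real m + 1) * h"
    using pa_I_diam_less[OF assms(2,3) I cells assms(7) \<open>0 \<le> a\<close> \<open>\<delta> \<le> a\<close> \<open>b \<le> 1\<close>] by simp
  then have "(b - a) / h' < (real m + 1) * h / h'"
    using \<open>0 < h'\<close> by (rule divide_strict_right_mono)
  have "b / h' < real T + 1"
  proof -
    have "b / h' \<le> 1 / h'" using \<open>b \<le> 1\<close> \<open>0 < h'\<close> by (simp add: divide_right_mono)
    then show ?thesis using \<open>1 / h' \<le> real T\<close> by linarith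
  qed
  moreover have "card {k. k < 2*(m*n) \<and> \<omega> k \<in> {real t * h'..<real t * h' + h'}} \<le> 5"
    if "t \<le> T" for t
    using typical that by blast
  ultimately have "real (card {k. k < 2*(m*n) \<and> \<omega> k \<in> {a..b}}) \<le> real 5 * ((b - a) / h' + 2)"
    using card_points_in_Icc_le[OF _ \<open>0 < h'\<close> \<open>0 \<le> a\<close> \<open>a \<le> b\<close>] by blast
  then have "real (card {k. k < 2*(m*n) \<and> \<omega> k \<in> {a..b}}) \<le> 5 * ((b - a) / h' + 2)"
    by simp
  moreover have "real (card ?A) \<le> real (card {k. k < 2*(m*n) \<and> \<omega> k \<in> {a..b}})"
    using ab(3) by (intro of_nat_mono card_mono) auto
  ultimately have "real (card ?A) < K"
    using K \<open>(b - a) / h' < (real m + 1) * h / h'\<close> by argo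
  with K_le show False by simp
qed

section \<open>Typical samples are likely\<close>

lemma prob_some_cell_missed:
  assumes "1 \<le> N" "0 < \<delta>" "0 < h"
  shows "measure (PiM {..<2*N} (\<lambda>_. unif01))
           {\<omega> \<in> space (PiM {..<2*N} (\<lambda>_. unif01)). \<exists>t::nat. \<delta> \<le> real t * h \<and> real t * h + h \<le> 1 \<and>
              (\<forall>l<N. \<not> (\<omega> (2*l) \<in> {real t * h..<real t * h + h} \<and> \<omega> (2*l+1) < real t * h))}
       \<le> (1 / h + 1) * exp (- (h * \<delta> * real N))"
proof -
  let ?M = "PiM {..<2*N} (\<lambda>_. unif01)"
  interpret P: prob_space ?M by (rule prob_space_PiM_unif01)
  define S where "S = {t::nat. t \<le> nat \<lfloor>1 / h\<rfloor> \<and> \<delta> \<le> real t * h \<and> real t * h + h \<le> 1}"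
  let ?missed = "\<lambda>t::nat. {\<omega> \<in> space ?M.
      \<forall>l<N. \<not> (\<omega> (2*l) \<in> {real t * h..<real t * h + h} \<and> \<omega> (2*l+1) < real t * h)}"
  have "finite S" unfolding S_def by simp
  have missed_event: "?missed t \<in> P.events" for t by measurable
  have in_S: "t \<in> S" if "\<delta> \<le> real t * h" "real t * h + h \<le> 1" for t
  proof -
    have "real t \<le> 1 / h" using that \<open>0 < h\<close> by (simp add: pos_le_divide_eq)
    then show ?thesis using that unfolding S_def by (simp add: le_nat_floor)
  qed
  have "{\<omega> \<in> space ?M. \<exists>t::nat. \<delta> \<le> real t * h \<and> real t * h + h \<le> 1 \<and>
              (\<forall>l<N. \<not> (\<omega> (2*l) \<in> {real t * h..<real t * h + h} \<and> \<omega> (2*l+1) < real t * h))}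
      \<subseteq> (\<Union>t\<in>S. ?missed t)"
    using in_S by blast
  then have "P.prob {\<omega> \<in> space ?M. \<exists>t::nat. \<delta> \<le> real t * h \<and> real t * h + h \<le> 1 \<and>
              (\<forall>l<N. \<not> (\<omega> (2*l) \<in> {real t * h..<real t * h + h} \<and> \<omega> (2*l+1) < real t * h))}
      \<le> P.prob (\<Union>t\<in>S. ?missed t)"
    by (intro P.finite_measure_mono) (use \<open>finite S\<close> in measurable)
  also have "\<dots> \<le> (\<Sum>t\<in>S. P.prob (?missed t))"
    by (rule P.finite_measure_subadditive_finite) (use \<open>finite S\<close> missed_event in auto)
  also have "\<dots> \<le> (\<Sum>t\<in>S. exp (- (h * \<delta> * real N)))"
  proof (rule sum_mono)
    fix t assume "t \<in> S"
    then have t: "\<delta> \<le> real t * h" "real t * h + h \<le> 1" unfolding S_def by auto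
    have "P.prob (?missed t) = (1 - h * (real t * h)) ^ N"
      using assms t by (intro prob_no_pair_hits_cell) auto
    also have "\<dots> = (1 - h * (real t * h) * real N / real N) ^ N"
      using assms by simp
    also have "\<dots> \<le> exp (- (h * (real t * h) * real N))"
    proof (rule exp_ge_one_minus_x_over_n_power_n)
      have "h * (real t * h) \<le> 1 * 1"
        using t assms by (intro mult_mono) auto
      then show "h * (real t * h) * real N \<le> real N"
        using assms by (intro mult_left_le_one_le) auto
    qed (use assms in simp)
    also have "\<dots> \<le> exp (- (h * \<delta> * real N))"
      using t assms by (simp add: mult_right_mono)
    finally show "P.prob (?missed t) \<le> exp (- (h * \<delta> * real N))" .
  qed
  also have "\<dots> \<le> (1 / h + 1) * exp (- (h * \<delta> * real N))"
  proof -
    have "card S \<le> card {..nat \<lfloor>1 / h\<rfloor>}" unfolding S_def by (intro card_mono) auto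
    then have "real (card S) \<le> real (nat \<lfloor>1 / h\<rfloor>) + 1"
      using of_nat_mono by fastforce
    moreover have "real (nat \<lfloor>1 / h\<rfloor>) \<le> 1 / h"
      using \<open>0 < h\<close> by (simp add: of_nat_nat)
    ultimately have "real (card S) \<le> 1 / h + 1" by linarith
    then show ?thesis by (simp add: mult_right_mono)
  qed
  finally show ?thesis .
qed

lemma prob_some_cell_crowded:
  fixes d T :: nat
  assumes "0 < h"
  shows "measure (PiM {..<d} (\<lambda>_. unif01))
           {\<omega> \<in> space (PiM {..<d} (\<lambda>_. unif01)). \<exists>t\<le>T. 6 \<le> card {k. k < d \<and> \<omega> k \<in> {real t * h..<real t * h + h}}}
       \<le> (real T + 1) * (real d * h) ^ 6"
proof -
  let ?M = "PiM {..<d} (\<lambda>_. unif01)"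
  interpret P: prob_space ?M by (rule prob_space_PiM_unif01)
  let ?crowded = "\<lambda>t::nat. {\<omega> \<in> space ?M. 6 \<le> card {k. k < d \<and> \<omega> k \<in> {real t * h..<real t * h + h}}}"
  have eq: "{\<omega> \<in> space ?M. \<exists>t\<le>T. 6 \<le> card {k. k < d \<and> \<omega> k \<in> {real t * h..<real t * h + h}}}
      = (\<Union>t\<in>{..T}. ?crowded t)" by auto
  have "?crowded t \<in> P.events" for t by measurable
  then have "P.prob (\<Union>t\<in>{..T}. ?crowded t) \<le> (\<Sum>t\<in>{..T}. P.prob (?crowded t))"
    by (intro P.finite_measure_subadditive_finite) auto
  also have "\<dots> \<le> (\<Sum>t\<in>{..T}. (real d * h) ^ 6)"
    using prob_many_coords_in_Ico[of "real t * h" "real t * h + h" 6 d for t] assms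
    by (intro sum_mono) simp
  finally show ?thesis unfolding eq by (simp add: add.commute)
qed

lemma prob_not_pa_typical:
  assumes "1 \<le> N" "0 < \<delta>" "\<delta> \<le> 1" "0 < h" "0 < h'" "0 < c"
  shows "measure (PiM {..<2*N} (\<lambda>_. unif01))
           {\<omega> \<in> space (PiM {..<2*N} (\<lambda>_. unif01)). \<not> pa_typical N c \<delta> h T h' \<omega>}
       \<le> real N * \<delta>^2 / c + (1 / h + 1) * exp (- (h * \<delta> * real N)) + (real T + 1) * (real (2*N) * h') ^ 6"
proof -
  let ?M = "PiM {..<2*N} (\<lambda>_. unif01)"
  interpret P: prob_space ?M by (rule prob_space_PiM_unif01)
  define outside where "outside = {\<omega> \<in> space ?M. \<exists>k<2*N. \<omega> k \<notin> {0..1}}"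
  define low where "low = {\<omega> \<in> space ?M. c \<le> real (card {l. l < N \<and> \<omega> (2*l) < \<delta> \<and> \<omega> (2*l+1) < \<delta>})}"
  define missed where "missed = {\<omega> \<in> space ?M. \<exists>t::nat. \<delta> \<le> real t * h \<and> real t * h + h \<le> 1 \<and>
      (\<forall>l<N. \<not> (\<omega> (2*l) \<in> {real t * h..<real t * h + h} \<and> \<omega> (2*l+1) < real t * h))}"
  define crowded where "crowded = {\<omega> \<in> space ?M.
      \<exists>t\<le>T. 6 \<le> card {k. k < 2*N \<and> \<omega> k \<in> {real t * h'..<real t * h' + h'}}}"
  have events: "outside \<in> P.events" "low \<in> P.events" "missed \<in> P.events" "crowded \<in> P.events"
    unfolding outside_def low_def missed_def crowded_def by measurable
  have "{\<omega> \<in> space ?M. \<not> pa_typical N c \<delta> h T h' \<omega>} \<subseteq> outside \<union> low \<union> missed \<union> crowded"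
    unfolding pa_typical_def outside_def low_def missed_def crowded_def by (auto simp: not_le)
  then have "P.prob {\<omega> \<in> space ?M. \<not> pa_typical N c \<delta> h T h' \<omega>} \<le> P.prob (outside \<union> low \<union> missed \<union> crowded)"
    using events by (intro P.finite_measure_mono) auto
  also have "\<dots> \<le> P.prob outside + P.prob low + P.prob missed + P.prob crowded"
    using events measure_Un_le[of _ ?M] add_right_mono by (smt (verit) sets.Un)
  also have "\<dots> \<le> 0 + real N * \<delta>^2 / c + (1 / h + 1) * exp (- (h * \<delta> * real N))
      + (real T + 1) * (real (2*N) * h') ^ 6"
  proof (intro add_mono)
    show "P.prob outside \<le> 0"
      unfolding outside_def prob_coord_outside_unit ..
    show "P.prob low \<le> real N * \<delta>^2 / c"
      unfolding low_def using assms by (intro prob_many_pairs_below) auto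
    show "P.prob missed \<le> (1 / h + 1) * exp (- (h * \<delta> * real N))"
      unfolding missed_def using assms by (intro prob_some_cell_missed) auto
    show "P.prob crowded \<le> (real T + 1) * (real (2*N) * h') ^ 6"
      unfolding crowded_def using assms by (intro prob_some_cell_crowded)
  qed
  finally show ?thesis by simp
qed

lemma prob_high_degree_vertices_early:
  fixes m n :: nat and \<delta> h h' K B :: real
  assumes "1 \<le> m" "1 \<le> n" "0 < \<delta>" "\<delta> \<le> 1" "0 < h" "0 < h'" "2 \<le> B"
    and K: "5 * ((real m + 1) * h / h' + 2) < K"
  shows "1 - (real n * \<delta>^2 / (B - 1) + (1 / h + 1) * exp (- (h * \<delta> * real n))
              + (2 * real m) ^ 6 * ((1 / h' + 2) * (real n * h') ^ 6))
     \<le> measure (pa_space m n)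
          {\<omega> \<in> space (pa_space m n). \<forall>j\<in>{1..n}. K \<le> real (pa_degree m n \<omega> j) \<longrightarrow> real j \<le> B}"
proof -
  let ?M = "PiM {..<2*(m*n)} (\<lambda>_. unif01)"
  interpret P: prob_space ?M by (rule prob_space_PiM_unif01)
  define T where "T = nat \<lceil>1 / h'\<rceil>"
  have T: "1 / h' \<le> real T" "real T + 1 \<le> 1 / h' + 2"
    unfolding T_def using \<open>0 < h'\<close> by (simp_all add: of_nat_nat) linarith
  define good where "good = {\<omega> \<in> space ?M. \<forall>j\<in>{1..n}. K \<le> real (pa_degree m n \<omega> j) \<longrightarrow> real j \<le> B}"
  let ?atypical = "{\<omega> \<in> space ?M. \<not> pa_typical (m*n) (real m * (B - 1)) \<delta> h T h' \<omega>}"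
  have "good \<in> P.events"
    unfolding good_def using assms(1) by (rule sets_high_degree_vertices_early)
  have "?atypical \<in> P.events" unfolding pa_typical_def by measurable
  moreover have "space ?M - good \<subseteq> ?atypical"
    using pa_degree_less_if_late[where T = T, OF _ assms(1) _ _ _ assms(3,5,6) T(1) K] assms(7)
    unfolding good_def by force
  ultimately have "P.prob (space ?M - good) \<le> P.prob ?atypical"
    by (intro P.finite_measure_mono)
  also have "\<dots> \<le> real (m*n) * \<delta>^2 / (real m * (B - 1)) + (1 / h + 1) * exp (- (h * \<delta> * real (m*n)))
      + (real T + 1) * (real (2*(m*n)) * h') ^ 6"
    using assms by (intro prob_not_pa_typical) auto
  also have "\<dots> \<le> real n * \<delta>^2 / (B - 1) + (1 / h + 1) * exp (- (h * \<delta> * real n))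
      + (2 * real m) ^ 6 * ((1 / h' + 2) * (real n * h') ^ 6)"
  proof (intro add_mono)
    show "real (m*n) * \<delta>^2 / (real m * (B - 1)) \<le> real n * \<delta>^2 / (B - 1)"
      using assms(1) by simp
    show "(1 / h + 1) * exp (- (h * \<delta> * real (m*n))) \<le> (1 / h + 1) * exp (- (h * \<delta> * real n))"
      using assms by (intro mult_left_mono) (auto intro!: mult_left_mono)
    have "(real T + 1) * (real (2*(m*n)) * h') ^ 6 \<le> (1 / h' + 2) * (real (2*(m*n)) * h') ^ 6"
      using T(2) by (intro mult_right_mono) auto
    also have "(real (2*(m*n)) * h') ^ 6 = (2 * real m) ^ 6 * (real n * h') ^ 6"
      by (simp add: power_mult_distrib[symmetric] mult.assoc)
    then have "(1 / h' + 2) * (real (2*(m*n)) * h') ^ 6 = (2 * real m) ^ 6 * ((1 / h' + 2) * (real n * h') ^ 6)"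
      by (simp only: mult.left_commute)
    finally show "(real T + 1) * (real (2*(m*n)) * h') ^ 6 \<le> \<dots>" .
  qed
  finally show ?thesis
    using P.prob_compl[OF \<open>good \<in> P.events\<close>] unfolding good_def pa_space_eq by simp
qed

theorem lemma4:
  fixes m :: nat
  assumes "m \<ge> 1"
  shows "(\<lambda>n. measure (pa_space m n)
            {\<omega> \<in> space (pa_space m n).
               \<forall>j\<in>{1..n}. real (pa_degree m n \<omega> j) \<ge> sqrt (real n) / (ln (real n)) powr (1/20)
                 \<longrightarrow> real j \<le> real n / (ln (real n)) powr (1/39)})
         \<longlonglongrightarrow> 1"
proof -
  let ?event = "\<lambda>n. {\<omega> \<in> space (pa_space m n).
      \<forall>j\<in>{1..n}. real (pa_degree m n \<omega> j) \<ge> sqrt (real n) / (ln (real n)) powr (1/20)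
        \<longrightarrow> real j \<le> real n / (ln (real n)) powr (1/39)}"
  define \<delta> :: "nat \<Rightarrow> real" where "\<delta> n = 1 / ln (real n) powr (1/39)" for n
  define h :: "nat \<Rightarrow> real" where "h n = real n powr (-3/4)" for n
  define h' :: "nat \<Rightarrow> real" where "h' n = real n powr (-5/4) * ln (real n)" for n
  define err where "err n = real n * \<delta> n ^ 2 / (real n / ln (real n) powr (1/39) - 1)
      + (1 / h n + 1) * exp (- (h n * \<delta> n * real n))
      + (2 * real m) ^ 6 * ((1 / h' n + 2) * (real n * h' n) ^ 6)" for n
  have "err \<longlonglongrightarrow> 0"
    unfolding err_def \<delta>_def h_def h'_def
    by (intro tendsto_add_zero tendsto_mult_right_zero) real_asymp+
  then have lower_lim: "(\<lambda>n. 1 - err n) \<longlonglongrightarrow> 1"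
    using tendsto_diff[OF tendsto_const, of err 0 _ 1] by simp
  have "eventually (\<lambda>n. 1 \<le> n \<and> 0 < \<delta> n \<and> \<delta> n \<le> 1 \<and> 0 < h n \<and> 0 < h' n \<and>
      2 \<le> real n / ln (real n) powr (1/39) \<and>
      5 * ((real m + 1) * h n / h' n + 2) < sqrt (real n) / ln (real n) powr (1/20)) sequentially"
    unfolding \<delta>_def h_def h'_def by (intro eventually_conj eventually_ge_at_top) real_asymp+
  then have "eventually (\<lambda>n. 1 - err n \<le> measure (pa_space m n) (?event n)) sequentially"
    by eventually_elim (unfold err_def, intro prob_high_degree_vertices_early[OF assms], auto)
  moreover have "eventually (\<lambda>n. measure (pa_space m n) (?event n) \<le> 1) sequentially"
    by (simp add: pa_space_eq prob_space.prob_le_1[OF prob_space_PiM_unif01])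
  ultimately show ?thesis
    by (rule tendsto_sandwich[OF _ _ lower_lim tendsto_const])
qed

end
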